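(* Let $\beta>1$ be fixed. Then the sequence $(\delta(k,\beta))_{k\in\mathbb{N}}$ is strictly increasing and \[ \delta(k,\beta)=(\beta-1)-\frac{\beta}{2(\beta+1)}\frac{1}{k^2}+O\!\left(\frac1{k^3}\right),\qquad k\to+\infty. \]
   Context: $\mathbb{N}=\{0,1,2,\dots\}$. For $t\ge 0$ let $q(t)=\lfloor t+1\rfloor/2$ if $\lfloor t\rfloor$ is odd and $q(t)=t-\lfloor t\rfloor/2$ if $\lfloor t\rfloor$ is even, and $p(t)=t+1-q(t)$. For $\beta\ge1$ let $\hat\sigma(t,\beta)\in(0,1)$ be the unique solution $\sigma$ of $\frac{p(t)\sigma}{\sqrt{1-\sigma^2}}+\frac{q(t)\sigma}{\sqrt{\beta^2-\sigma^2}}=1$, and $l(t,\beta)=\frac{p(t)}{\sqrt{1-\hat\sigma^2}}+\frac{\beta^2q(t)}{\sqrt{\beta^2-\hat\sigma^2}}-t-\sqrt2$. For $k\in\mathbb{N}$, $\delta(k,\beta)=l(2k+2,\beta)-l(2k,\beta)$. *)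

theory Defs
  imports "HOL-Analysis.Analysis" "HOL-Library.Landau_Symbols"
begin

definition qf :: "real \<Rightarrow> real" where
  "qf t = (if odd \<lfloor>t\<rfloor> then real_of_int \<lfloor>t + 1\<rfloor> / 2
           else t - real_of_int \<lfloor>t\<rfloor> / 2)"

definition pf :: "real \<Rightarrow> real" where
  "pf t = t + 1 - qf t"

definition sigma_hat :: "real \<Rightarrow> real \<Rightarrow> real" where
  "sigma_hat t \<beta> = (THE \<sigma>. 0 < \<sigma> \<and> \<sigma> < 1 \<and>
      pf t * \<sigma> / sqrt (1 - \<sigma>\<^sup>2) + qf t * \<sigma> / sqrt (\<beta>\<^sup>2 - \<sigma>\<^sup>2) = 1)"

definition lf :: "real \<Rightarrow> real \<Rightarrow> real" where
  "lf t \<beta> = pf t / sqrt (1 - (sigma_hat t \<beta>)\<^sup>2)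
             + \<beta>\<^sup>2 * qf t / sqrt (\<beta>\<^sup>2 - (sigma_hat t \<beta>)\<^sup>2) - t - sqrt 2"

definition delta :: "nat \<Rightarrow> real \<Rightarrow> real" where
  "delta k \<beta> = lf (2 * real k + 2) \<beta> - lf (2 * real k) \<beta>"

end

theory Submission
  imports Defs
begin

(* For even t = 2k the weights are (p, q) = (k + 1, k), and l(t, beta) + t + sqrt 2 is the maximum
   over s in [0, 1] of phi(s) = p sqrt(1 - s^2) + q sqrt(beta^2 - s^2) + s, attained at sigma_hat.
   A maximum of functions linear in (p, q) is convex in (p, q); along the diagonal it is strictly
   convex because the maximiser moves, and this is the monotonicity of delta.  Expanding the square
   roots to second order gives max phi = p + q beta + 1/(2A) + O(A^-3) with A = p + q/beta, and the
   difference of the 1/(2A) terms for consecutive k produces the k^-2 term. *)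

lemma qf_pf_even: "qf (2 * real k) = real k" "pf (2 * real k) = real k + 1"
proof -
  have k: "2 * real k = real_of_int (2 * int k)" by simp
  show "qf (2 * real k) = real k" unfolding qf_def k floor_of_int by simp
  then show "pf (2 * real k) = real k + 1" by (simp add: pf_def)
qed

lemma qf_pf_even_Suc: "qf (2 * real k + 2) = real k + 1" "pf (2 * real k + 2) = real k + 2"
  using qf_pf_even[of "Suc k"] by (simp_all add: algebra_simps)

text \<open>The \<open>s\<close>-derivative of \<open>phi \<beta> p q\<close> is \<open>1 - psi \<beta> p q\<close>, so the equation defining
  \<open>sigma_hat\<close> locates the critical point of \<open>phi \<beta> (pf t) (qf t)\<close>.\<close>

definition phi :: "real \<Rightarrow> real \<Rightarrow> real \<Rightarrow> real \<Rightarrow> real" where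
  "phi \<beta> p q s = p * sqrt (1 - s\<^sup>2) + q * sqrt (\<beta>\<^sup>2 - s\<^sup>2) + s"

definition psi :: "real \<Rightarrow> real \<Rightarrow> real \<Rightarrow> real \<Rightarrow> real" where
  "psi \<beta> p q s = p * s / sqrt (1 - s\<^sup>2) + q * s / sqrt (\<beta>\<^sup>2 - s\<^sup>2)"

lemma sqrt_product_defect:
  fixes b c c' \<sigma> s :: real
  assumes "c\<^sup>2 = b - \<sigma>\<^sup>2" "c'\<^sup>2 = b - s\<^sup>2"
  shows "b - c * c' - \<sigma> * s = ((s - \<sigma>)\<^sup>2 + (c - c')\<^sup>2) / 2"
  using assms by (simp add: power2_eq_square algebra_simps)

lemma phi_diff_at_critical:
  assumes b: "\<beta> > 1" and \<sigma>: "0 \<le> \<sigma>" "\<sigma> < 1" and crit: "psi \<beta> p q \<sigma> = 1" and s: "0 \<le> s" "s \<le> 1"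
  defines "c \<equiv> sqrt (1 - \<sigma>\<^sup>2)" and "c' \<equiv> sqrt (1 - s\<^sup>2)"
    and "d \<equiv> sqrt (\<beta>\<^sup>2 - \<sigma>\<^sup>2)" and "d' \<equiv> sqrt (\<beta>\<^sup>2 - s\<^sup>2)"
  shows "phi \<beta> p q \<sigma> - phi \<beta> p q s
    = p * ((s - \<sigma>)\<^sup>2 + (c - c')\<^sup>2) / (2 * c) + q * ((s - \<sigma>)\<^sup>2 + (d - d')\<^sup>2) / (2 * d)"
proof -
  have s2: "s\<^sup>2 \<le> 1" using s by (simp add: power_le_one)
  have \<sigma>2: "\<sigma>\<^sup>2 < 1" using \<sigma> by (simp add: power_less_one_iff)
  have b2: "1 < \<beta>\<^sup>2" using b by (simp add: one_less_power)
  have cd_pos: "c > 0" "d > 0" unfolding c_def d_def using \<sigma>2 b2 by auto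
  have "c\<^sup>2 = 1 - \<sigma>\<^sup>2" "c'\<^sup>2 = 1 - s\<^sup>2" "d\<^sup>2 = \<beta>\<^sup>2 - \<sigma>\<^sup>2" "d'\<^sup>2 = \<beta>\<^sup>2 - s\<^sup>2"
    unfolding c_def c'_def d_def d'_def using s2 \<sigma>2 b2 by auto
  then have defects: "1 - c * c' - \<sigma> * s = ((s - \<sigma>)\<^sup>2 + (c - c')\<^sup>2) / 2"
      "\<beta>\<^sup>2 - d * d' - \<sigma> * s = ((s - \<sigma>)\<^sup>2 + (d - d')\<^sup>2) / 2"
    using sqrt_product_defect[of c 1 \<sigma> c' s] sqrt_product_defect[of d "\<beta>\<^sup>2" \<sigma> d' s] by auto
  have "phi \<beta> p q \<sigma> - phi \<beta> p q s = p * (c - c') + q * (d - d') + (\<sigma> - s) * psi \<beta> p q \<sigma>"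
    using crit unfolding phi_def c_def c'_def d_def d'_def by (simp add: algebra_simps)
  also have "\<dots> = p * ((c\<^sup>2 + \<sigma>\<^sup>2) - c * c' - \<sigma> * s) / c + q * ((d\<^sup>2 + \<sigma>\<^sup>2) - d * d' - \<sigma> * s) / d"
    using cd_pos unfolding psi_def c_def[symmetric] d_def[symmetric]
    by (simp add: field_simps power2_eq_square)
  also have "\<dots> = p * (1 - c * c' - \<sigma> * s) / c + q * (\<beta>\<^sup>2 - d * d' - \<sigma> * s) / d"
    using \<open>c\<^sup>2 = 1 - \<sigma>\<^sup>2\<close> \<open>d\<^sup>2 = \<beta>\<^sup>2 - \<sigma>\<^sup>2\<close> by simp
  finally show ?thesis by (simp add: defects)
qed

lemma phi_le_at_critical:
  assumes "\<beta> > 1" "p \<ge> 0" "q \<ge> 0" "0 \<le> \<sigma>" "\<sigma> < 1" "psi \<beta> p q \<sigma> = 1" "0 \<le> s" "s \<le> 1"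
  shows "phi \<beta> p q s \<le> phi \<beta> p q \<sigma>"
    and "p > 0 \<Longrightarrow> s \<noteq> \<sigma> \<Longrightarrow> phi \<beta> p q s < phi \<beta> p q \<sigma>"
proof -
  have \<sigma>2: "\<sigma>\<^sup>2 < 1" using assms by (simp add: power_less_one_iff)
  have "1 < \<beta>\<^sup>2" using assms by (simp add: one_less_power)
  then have b2: "\<sigma>\<^sup>2 < \<beta>\<^sup>2" using \<sigma>2 by linarith
  define c where "c = sqrt (1 - \<sigma>\<^sup>2)"
  define d where "d = sqrt (\<beta>\<^sup>2 - \<sigma>\<^sup>2)"
  have cd_pos: "c > 0" "d > 0" unfolding c_def d_def using \<sigma>2 b2 by auto
  obtain u v where uv: "u \<ge> 0" "v \<ge> 0"
    and diff: "phi \<beta> p q \<sigma> - phi \<beta> p q s = p * ((s - \<sigma>)\<^sup>2 + u) / (2 * c) + q * ((s - \<sigma>)\<^sup>2 + v) / (2 * d)"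
    using phi_diff_at_critical[OF assms(1,4,5,6,7,8)] unfolding c_def d_def
    by (intro that[of "(c - sqrt (1 - s\<^sup>2))\<^sup>2" "(d - sqrt (\<beta>\<^sup>2 - s\<^sup>2))\<^sup>2"]) (auto simp: c_def d_def)
  have q_term: "q * ((s - \<sigma>)\<^sup>2 + v) / (2 * d) \<ge> 0" using assms uv cd_pos by simp
  have "p * ((s - \<sigma>)\<^sup>2 + u) / (2 * c) \<ge> 0" using assms uv cd_pos by simp
  then show "phi \<beta> p q s \<le> phi \<beta> p q \<sigma>" using diff q_term by linarith
  assume "p > 0" "s \<noteq> \<sigma>"
  then have "p * ((s - \<sigma>)\<^sup>2 + u) / (2 * c) > 0" using uv cd_pos by (simp add: add_pos_nonneg)
  then show "phi \<beta> p q s < phi \<beta> p q \<sigma>" using diff q_term by linarith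
qed

lemma psi_eq_one_exists:
  assumes b: "\<beta> > 1" and p: "p \<ge> 1" and q: "q \<ge> 0"
  shows "\<exists>\<sigma>. 0 < \<sigma> \<and> \<sigma> < 1 \<and> psi \<beta> p q \<sigma> = 1"
proof -
  have b2: "1 < \<beta>\<^sup>2" using b by (simp add: one_less_power)
  have "sqrt (1 - x\<^sup>2) \<noteq> 0 \<and> sqrt (\<beta>\<^sup>2 - x\<^sup>2) \<noteq> 0" if "x \<in> {0..4/5}" for x :: real
  proof -
    have "x\<^sup>2 < 1" using that by (simp add: power_less_one_iff)
    then show ?thesis using b2 by simp
  qed
  then have "continuous_on {0..4/5} (psi \<beta> p q)"
    unfolding psi_def by (intro continuous_intros) auto
  moreover have "psi \<beta> p q 0 \<le> 1" by (simp add: psi_def)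
  moreover have "1 \<le> psi \<beta> p q (4/5)"
  proof -
    have "1 - (4/5::real)\<^sup>2 = (3/5)\<^sup>2" by (simp add: power2_eq_square)
    then have "p * (4/5) / sqrt (1 - (4/5::real)\<^sup>2) \<ge> 1" using p by simp
    moreover have "(4/5::real)\<^sup>2 < \<beta>\<^sup>2" using b2 by (simp add: power2_eq_square)
    then have "q * (4/5) / sqrt (\<beta>\<^sup>2 - (4/5)\<^sup>2) \<ge> 0" using q by simp
    ultimately show ?thesis unfolding psi_def by linarith
  qed
  ultimately obtain x where x: "0 \<le> x" "x \<le> 4/5" "psi \<beta> p q x = 1"
    using IVT'[of "psi \<beta> p q" 0 1 "4/5"] by auto
  moreover have "x \<noteq> 0" using x(3) by (auto simp: psi_def)
  ultimately show ?thesis by (intro exI[of _ x]) auto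
qed

lemma psi_eq_one_unique:
  assumes "\<beta> > 1" "p > 0" "q \<ge> 0"
    and "0 < x" "x < 1" "psi \<beta> p q x = 1" and "0 < y" "y < 1" "psi \<beta> p q y = 1"
  shows "x = y"
  using phi_le_at_critical(2)[of \<beta> p q x y] phi_le_at_critical(2)[of \<beta> p q y x] assms
  by force

definition sigma_max :: "real \<Rightarrow> real \<Rightarrow> real \<Rightarrow> real" where
  "sigma_max \<beta> p q = (THE \<sigma>. 0 < \<sigma> \<and> \<sigma> < 1 \<and> psi \<beta> p q \<sigma> = 1)"

definition phi_max :: "real \<Rightarrow> real \<Rightarrow> real \<Rightarrow> real" where
  "phi_max \<beta> p q = phi \<beta> p q (sigma_max \<beta> p q)"

lemma sigma_max:
  assumes "\<beta> > 1" "p \<ge> 1" "q \<ge> 0"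
  shows "0 < sigma_max \<beta> p q" "sigma_max \<beta> p q < 1" "psi \<beta> p q (sigma_max \<beta> p q) = 1"
proof -
  have "\<exists>!\<sigma>. 0 < \<sigma> \<and> \<sigma> < 1 \<and> psi \<beta> p q \<sigma> = 1"
    using psi_eq_one_exists[OF assms] psi_eq_one_unique[of \<beta> p q] assms by auto
  from theI'[OF this] show "0 < sigma_max \<beta> p q" "sigma_max \<beta> p q < 1"
    "psi \<beta> p q (sigma_max \<beta> p q) = 1" unfolding sigma_max_def by auto
qed

lemma phi_le_phi_max:
  assumes "\<beta> > 1" "p \<ge> 1" "q \<ge> 0" "0 \<le> s" "s \<le> 1"
  shows "phi \<beta> p q s \<le> phi_max \<beta> p q"
    and "s \<noteq> sigma_max \<beta> p q \<Longrightarrow> phi \<beta> p q s < phi_max \<beta> p q"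
  using phi_le_at_critical[of \<beta> p q "sigma_max \<beta> p q" s] sigma_max[of \<beta> p q] assms
  unfolding phi_max_def by auto

lemma phi_at_critical:
  assumes "\<beta> > 1" "0 \<le> \<sigma>" "\<sigma> < 1" "psi \<beta> p q \<sigma> = 1"
  shows "phi \<beta> p q \<sigma> = p / sqrt (1 - \<sigma>\<^sup>2) + \<beta>\<^sup>2 * q / sqrt (\<beta>\<^sup>2 - \<sigma>\<^sup>2)"
proof -
  define c where "c = sqrt (1 - \<sigma>\<^sup>2)"
  define d where "d = sqrt (\<beta>\<^sup>2 - \<sigma>\<^sup>2)"
  have \<sigma>2: "\<sigma>\<^sup>2 < 1" using assms by (simp add: power_less_one_iff)
  have b2: "1 < \<beta>\<^sup>2" using assms by (simp add: one_less_power)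
  have cd_pos: "c > 0" "d > 0" unfolding c_def d_def using \<sigma>2 b2 by auto
  have sq: "c\<^sup>2 = 1 - \<sigma>\<^sup>2" "d\<^sup>2 = \<beta>\<^sup>2 - \<sigma>\<^sup>2" unfolding c_def d_def using \<sigma>2 b2 by auto
  have "p / c + \<beta>\<^sup>2 * q / d = p * ((c\<^sup>2 + \<sigma>\<^sup>2) / c) + q * ((d\<^sup>2 + \<sigma>\<^sup>2) / d)"
    using sq by simp
  also have "\<dots> = p * c + q * d + \<sigma> * psi \<beta> p q \<sigma>"
    using cd_pos unfolding psi_def c_def[symmetric] d_def[symmetric]
    by (simp add: field_simps power2_eq_square)
  also have "\<dots> = phi \<beta> p q \<sigma>" using assms unfolding phi_def c_def d_def by simp
  finally show ?thesis unfolding c_def d_def ..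
qed

lemma lf_eq_phi_max:
  assumes "\<beta> > 1" "pf t \<ge> 1" "qf t \<ge> 0"
  shows "lf t \<beta> = phi_max \<beta> (pf t) (qf t) - t - sqrt 2"
proof -
  have "sigma_hat t \<beta> = sigma_max \<beta> (pf t) (qf t)"
    unfolding sigma_hat_def sigma_max_def psi_def ..
  then show ?thesis
    using phi_at_critical[of \<beta> "sigma_max \<beta> (pf t) (qf t)" "pf t" "qf t"] sigma_max[OF assms]
    unfolding lf_def phi_max_def by (simp add: assms(1))
qed

lemma delta_eq_phi_max:
  assumes "\<beta> > 1"
  shows "delta k \<beta> = phi_max \<beta> (real k + 2) (real k + 1) - phi_max \<beta> (real k + 1) (real k) - 2"
  using lf_eq_phi_max[OF assms, of "2 * real k + 2"] lf_eq_phi_max[OF assms, of "2 * real k"]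
  unfolding delta_def by (simp add: qf_pf_even qf_pf_even_Suc)

text \<open>\<open>phi_max \<beta>\<close> is a supremum of functions linear in \<open>(p, q)\<close>, hence convex; strictly so along
  the diagonal because \<open>psi\<close> increases strictly with \<open>(p, q)\<close>, which moves the maximiser.\<close>

lemma phi_max_diagonal_strict_convex:
  assumes b: "\<beta> > 1" and p: "p \<ge> 1" and q: "q \<ge> 0"
  shows "2 * phi_max \<beta> (p + 1) (q + 1) < phi_max \<beta> p q + phi_max \<beta> (p + 2) (q + 2)"
proof -
  define \<sigma> where "\<sigma> = sigma_max \<beta> (p + 1) (q + 1)"
  have \<sigma>: "0 < \<sigma>" "\<sigma> < 1" "psi \<beta> (p + 1) (q + 1) \<sigma> = 1"
    using sigma_max[of \<beta> "p + 1" "q + 1"] assms unfolding \<sigma>_def by auto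
  have \<sigma>2: "\<sigma>\<^sup>2 < 1" using \<sigma> by (simp add: power_less_one_iff)
  have b2: "1 < \<beta>\<^sup>2" using b by (simp add: one_less_power)
  have "psi \<beta> (p + 2) (q + 2) \<sigma> = psi \<beta> (p + 1) (q + 1) \<sigma> + \<sigma> / sqrt (1 - \<sigma>\<^sup>2) + \<sigma> / sqrt (\<beta>\<^sup>2 - \<sigma>\<^sup>2)"
    unfolding psi_def by (simp add: add_divide_distrib algebra_simps)
  moreover have "\<sigma> / sqrt (1 - \<sigma>\<^sup>2) > 0" "\<sigma> / sqrt (\<beta>\<^sup>2 - \<sigma>\<^sup>2) > 0" using \<sigma> \<sigma>2 b2 by auto
  ultimately have "psi \<beta> (p + 2) (q + 2) \<sigma> \<noteq> 1" using \<sigma>(3) by linarith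
  then have "\<sigma> \<noteq> sigma_max \<beta> (p + 2) (q + 2)" using sigma_max[of \<beta> "p + 2" "q + 2"] assms by auto
  then have "phi \<beta> (p + 2) (q + 2) \<sigma> < phi_max \<beta> (p + 2) (q + 2)"
    using phi_le_phi_max(2)[of \<beta> "p + 2" "q + 2" \<sigma>] assms \<sigma> by auto
  moreover have "phi \<beta> p q \<sigma> \<le> phi_max \<beta> p q" using phi_le_phi_max(1) assms \<sigma> by auto
  moreover have "phi \<beta> p q \<sigma> + phi \<beta> (p + 2) (q + 2) \<sigma> = 2 * phi \<beta> (p + 1) (q + 1) \<sigma>"
    unfolding phi_def by (simp add: algebra_simps)
  ultimately show ?thesis unfolding phi_max_def \<sigma>_def[symmetric] by linarith
qed

lemma delta_strict_mono:
  assumes "\<beta> > 1"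
  shows "strict_mono (\<lambda>k. delta k \<beta>)"
proof (rule strict_monoI_Suc)
  fix k
  show "delta k \<beta> < delta (Suc k) \<beta>"
    using phi_max_diagonal_strict_convex[OF assms, of "real k + 1" "real k"]
    unfolding delta_eq_phi_max[OF assms] by (simp add: algebra_simps)
qed

lemma sqrt_diff_le:
  fixes \<beta> x :: real
  assumes "\<beta> > 0" "x \<le> 2 * \<beta>\<^sup>2"
  shows "sqrt (\<beta>\<^sup>2 - x) \<le> \<beta> - x / (2 * \<beta>)"
proof -
  have "\<beta>\<^sup>2 - x \<le> (\<beta> - x / (2 * \<beta>))\<^sup>2" using assms by (simp add: power2_eq_square field_simps)
  moreover have "0 \<le> \<beta> - x / (2 * \<beta>)" using assms by (simp add: field_simps power2_eq_square)
  ultimately show ?thesis by (rule real_le_lsqrt[rotated])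
qed

lemma sqrt_one_minus_ge:
  fixes y :: real
  assumes "0 \<le> y" "y \<le> 1"
  shows "1 - y / 2 - y\<^sup>2 / 2 \<le> sqrt (1 - y)"
proof (rule real_le_rsqrt)
  have "y\<^sup>2 \<le> 1" using assms by (simp add: power_le_one)
  then have "y\<^sup>2 * (3/4 - y/2 - y\<^sup>2/4) \<ge> 0" using assms by simp
  moreover have "(1 - y/2 - y\<^sup>2/2)\<^sup>2 = (1 - y) - y\<^sup>2 * (3/4 - y/2 - y\<^sup>2/4)"
    by (simp add: power2_eq_square field_simps)
  ultimately show "(1 - y/2 - y\<^sup>2/2)\<^sup>2 \<le> 1 - y" by linarith
qed

lemma sqrt_diff_ge:
  fixes \<beta> x :: real
  assumes "\<beta> > 0" "0 \<le> x" "x \<le> \<beta>\<^sup>2"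
  shows "\<beta> - x / (2 * \<beta>) - x\<^sup>2 / (2 * \<beta>^3) \<le> sqrt (\<beta>\<^sup>2 - x)"
proof -
  define y where "y = x / \<beta>\<^sup>2"
  have y: "0 \<le> y" "y \<le> 1" unfolding y_def using assms by auto
  have "\<beta>\<^sup>2 - x = \<beta>\<^sup>2 * (1 - y)" unfolding y_def using assms by (simp add: field_simps)
  then have "sqrt (\<beta>\<^sup>2 - x) = \<beta> * sqrt (1 - y)" using assms by (simp add: real_sqrt_mult)
  moreover have "\<beta> - x / (2 * \<beta>) - x\<^sup>2 / (2 * \<beta>^3) = \<beta> * (1 - y / 2 - y\<^sup>2 / 2)"
    unfolding y_def using assms by (simp add: field_simps power2_eq_square power3_eq_cube)
  ultimately show ?thesis using sqrt_one_minus_ge[OF y] assms by simp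
qed

lemma phi_max_le:
  assumes b: "\<beta> > 1" and p: "p \<ge> 1" and q: "q \<ge> 0"
  defines "A \<equiv> p + q / \<beta>"
  shows "phi_max \<beta> p q \<le> p + q * \<beta> + 1 / (2 * A)"
proof -
  define \<sigma> where "\<sigma> = sigma_max \<beta> p q"
  have \<sigma>: "0 < \<sigma>" "\<sigma> < 1" using sigma_max[OF b p q] unfolding \<sigma>_def by auto
  have A_pos: "A > 0" unfolding A_def using b p q by (simp add: add_pos_nonneg)
  have "\<sigma>\<^sup>2 \<le> 1" using \<sigma> by (simp add: power_le_one)
  moreover have "1 \<le> \<beta>\<^sup>2" using b by (simp add: one_le_power)
  ultimately have "\<sigma>\<^sup>2 \<le> 2 * 1\<^sup>2" "\<sigma>\<^sup>2 \<le> 2 * \<beta>\<^sup>2" by simp_all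
  then have "sqrt (1 - \<sigma>\<^sup>2) \<le> 1 - \<sigma>\<^sup>2 / 2" "sqrt (\<beta>\<^sup>2 - \<sigma>\<^sup>2) \<le> \<beta> - \<sigma>\<^sup>2 / (2 * \<beta>)"
    using sqrt_diff_le[of 1 "\<sigma>\<^sup>2"] sqrt_diff_le[of \<beta> "\<sigma>\<^sup>2"] b by simp_all
  then have "phi_max \<beta> p q \<le> p * (1 - \<sigma>\<^sup>2 / 2) + q * (\<beta> - \<sigma>\<^sup>2 / (2 * \<beta>)) + \<sigma>"
    unfolding phi_max_def phi_def \<sigma>_def[symmetric] using p q
    by (intro add_mono mult_left_mono) auto
  also have "\<dots> = p + q * \<beta> + (\<sigma> - A * \<sigma>\<^sup>2 / 2)"
    unfolding A_def using b by (simp add: field_simps)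
  also have "\<dots> = p + q * \<beta> + 1 / (2 * A) - (A * \<sigma> - 1)\<^sup>2 / (2 * A)"
    using A_pos by (simp add: field_simps power2_eq_square)
  also have "\<dots> \<le> p + q * \<beta> + 1 / (2 * A)"
    using A_pos by simp
  finally show ?thesis .
qed

text \<open>Evaluate \<open>phi\<close> at \<open>s = 1/A\<close>, the maximiser of its second-order expansion.\<close>

lemma phi_max_ge:
  assumes b: "\<beta> > 1" and p: "p \<ge> 1" and q: "q \<ge> 0"
  defines "A \<equiv> p + q / \<beta>"
  shows "p + q * \<beta> + 1 / (2 * A) - 1 / (2 * A^3) \<le> phi_max \<beta> p q"
proof -
  have "q / \<beta> \<ge> 0" using q b by simp
  then have A: "A \<ge> 1" unfolding A_def using p by linarith
  define s where "s = 1 / A"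
  have s: "0 \<le> s" "s \<le> 1" unfolding s_def using A by auto
  have s2: "0 \<le> s\<^sup>2" "s\<^sup>2 \<le> 1" "s\<^sup>2 \<le> \<beta>\<^sup>2"
    using s b by (auto simp: power_le_one intro: order_trans[OF _ one_le_power])
  have "q / \<beta>^3 \<le> q / \<beta>"
    using b q less_1_mult[OF b b] by (intro divide_left_mono) (auto simp: power3_eq_cube)
  then have "(p + q / \<beta>^3) / (2 * A^4) \<le> A / (2 * A^4)"
    unfolding A_def using A by (intro divide_right_mono) auto
  also have "\<dots> = 1 / (2 * A^3)" using A by (simp add: power4_eq_xxxx power3_eq_cube)
  finally have remainder: "(p + q / \<beta>^3) / (2 * A^4) \<le> 1 / (2 * A^3)" .
  have "p + q * \<beta> + 1 / (2 * A) - (p + q / \<beta>^3) / (2 * A^4)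
      = p + q * \<beta> + (s - A * s\<^sup>2 / 2) - (p + q / \<beta>^3) * s^4 / 2"
    unfolding s_def using A by (simp add: field_simps power2_eq_square power4_eq_xxxx)
  also have "\<dots> = p * (1 - s\<^sup>2 / 2 - (s\<^sup>2)\<^sup>2 / 2) + q * (\<beta> - s\<^sup>2 / (2 * \<beta>) - (s\<^sup>2)\<^sup>2 / (2 * \<beta>^3)) + s"
    unfolding A_def using b by (simp add: field_simps power2_eq_square power4_eq_xxxx)
  also have "\<dots> \<le> phi \<beta> p q s"
    unfolding phi_def using sqrt_diff_ge[of 1 "s\<^sup>2"] sqrt_diff_ge[of \<beta> "s\<^sup>2"] s2 b p q
    by (intro add_mono mult_left_mono) auto
  also have "\<dots> \<le> phi_max \<beta> p q" using phi_le_phi_max(1)[OF b p q s] .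
  finally show ?thesis using remainder by linarith
qed

lemma diagonal_correction_bounds:
  fixes \<beta> K :: real
  assumes b: "\<beta> > 0" and K: "K \<ge> 1"
  defines "D \<equiv> 1 / (2 * (K + 2 + (K + 1) / \<beta>)) - 1 / (2 * (K + 1 + K / \<beta>)) + \<beta> / (2 * (\<beta> + 1) * K\<^sup>2)"
  shows "0 \<le> D" "D \<le> 5 / (2 * K^3)"
proof -
  define c where "c = \<beta> + 1"
  define X1 where "X1 = c * K + \<beta>"
  define X2 where "X2 = X1 + c"
  define N where "N = X1 * X2 - (c * K)\<^sup>2"
  have cK: "0 < c * K" unfolding c_def using b K by simp
  have X: "c * K \<le> X1" "c * K \<le> X2" unfolding X1_def X2_def c_def using b by auto
  have pos: "c > 0" "K > 0" "X1 > 0" "X2 > 0" using X cK b K unfolding c_def by linarith+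
  have "D = \<beta> / (2 * X2) - \<beta> / (2 * X1) + \<beta> / (2 * c * K\<^sup>2)"
    unfolding D_def X2_def X1_def c_def using b by (simp add: field_simps)
  also have "\<beta> / (2 * X2) - \<beta> / (2 * X1) = \<beta> * (X1 - X2) / (2 * X1 * X2)"
    using pos by (simp add: field_simps)
  also have "X1 - X2 = - c" unfolding X2_def by simp
  also have "\<beta> * - c / (2 * X1 * X2) + \<beta> / (2 * c * K\<^sup>2) = \<beta> * N / (2 * c * K\<^sup>2 * (X1 * X2))"
    unfolding N_def using pos by (simp add: field_simps power2_eq_square)
  finally have D_eq: "D = \<beta> * N / (2 * c * K\<^sup>2 * (X1 * X2))" .
  have XX: "(c * K)\<^sup>2 \<le> X1 * X2" using X cK unfolding power2_eq_square by (intro mult_mono) auto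
  then show "0 \<le> D" unfolding D_eq N_def using b pos by simp
  have "N = c * (3 * \<beta> + 1) * K + \<beta> * (2 * \<beta> + 1)"
    unfolding N_def X2_def X1_def c_def by (simp add: power2_eq_square algebra_simps)
  also have "\<dots> \<le> c * (3 * \<beta> + 1) * K + \<beta> * (2 * \<beta> + 1) * K"
    using b K by simp
  also have "\<dots> \<le> 5 * c\<^sup>2 * K"
    unfolding c_def using b K by (simp add: power2_eq_square algebra_simps)
  finally have "\<beta> * N / (2 * c * K\<^sup>2 * (X1 * X2)) \<le> \<beta> * (5 * c\<^sup>2 * K) / (2 * c * K\<^sup>2 * (c * K)\<^sup>2)"
    using XX b pos by (intro frac_le mult_left_mono) (auto simp: N_def)
  also have "\<dots> = (\<beta> / c) * (5 / (2 * K^3))"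
    using cK by (simp add: field_simps power2_eq_square power3_eq_cube)
  also have "\<dots> \<le> 5 / (2 * K^3)"
    unfolding c_def using b K by (intro mult_left_le_one_le) auto
  finally show "D \<le> 5 / (2 * K^3)" unfolding D_eq .
qed

lemma delta_expansion_error:
  assumes b: "\<beta> > 1" and k: "k \<ge> 1"
  shows "\<bar>delta k \<beta> - ((\<beta> - 1) - \<beta> / (2 * (\<beta> + 1)) * (1 / (real k)\<^sup>2))\<bar> \<le> 4 / (real k)^3"
proof -
  define K where "K = real k"
  have K: "1 \<le> K" unfolding K_def using k by simp
  define A1 where "A1 = K + 1 + K / \<beta>"
  define A2 where "A2 = K + 2 + (K + 1) / \<beta>"
  have "K \<le> A1" "K \<le> A2" unfolding A1_def A2_def using b K by auto
  then have cubes: "1 / (2 * A1^3) \<le> 1 / (2 * K^3)" "1 / (2 * A2^3) \<le> 1 / (2 * K^3)"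
    using K by (auto intro!: divide_left_mono power_mono)
  have M1: "K + 1 + K * \<beta> + 1 / (2 * A1) - 1 / (2 * A1^3) \<le> phi_max \<beta> (K + 1) K"
      "phi_max \<beta> (K + 1) K \<le> K + 1 + K * \<beta> + 1 / (2 * A1)"
    using phi_max_ge[OF b, of "K + 1" K] phi_max_le[OF b, of "K + 1" K] K unfolding A1_def by auto
  have M2: "K + 2 + K * \<beta> + \<beta> + 1 / (2 * A2) - 1 / (2 * A2^3) \<le> phi_max \<beta> (K + 2) (K + 1)"
      "phi_max \<beta> (K + 2) (K + 1) \<le> K + 2 + K * \<beta> + \<beta> + 1 / (2 * A2)"
    using phi_max_ge[OF b, of "K + 2" "K + 1"] phi_max_le[OF b, of "K + 2" "K + 1"] K
    unfolding A2_def by (auto simp: algebra_simps)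
  have D: "0 \<le> 1 / (2 * A2) - 1 / (2 * A1) + \<beta> / (2 * (\<beta> + 1) * K\<^sup>2)"
      "1 / (2 * A2) - 1 / (2 * A1) + \<beta> / (2 * (\<beta> + 1) * K\<^sup>2) \<le> 5 / (2 * K^3)"
    using diagonal_correction_bounds[of \<beta> K] b K unfolding A1_def A2_def by auto
  have "\<beta> / (2 * (\<beta> + 1)) * (1 / K\<^sup>2) = \<beta> / (2 * (\<beta> + 1) * K\<^sup>2)" by simp
  then have "\<bar>delta k \<beta> - ((\<beta> - 1) - \<beta> / (2 * (\<beta> + 1)) * (1 / K\<^sup>2))\<bar> \<le> 5 / (2 * K^3) + 1 / (2 * K^3)"
    using delta_eq_phi_max[OF b, of k] M1 M2 D cubes unfolding K_def[symmetric] by linarith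
  also have "\<dots> \<le> 4 / K^3" using K by (simp add: field_simps)
  finally show ?thesis unfolding K_def .
qed

theorem theorem3p8:
  fixes \<beta> :: real
  assumes "\<beta> > 1"
  shows "strict_mono (\<lambda>k. delta k \<beta>)
         \<and> (\<lambda>k. delta k \<beta> - ((\<beta> - 1) - \<beta> / (2 * (\<beta> + 1)) * (1 / (real k)\<^sup>2)))
             \<in> O[sequentially](\<lambda>k. 1 / (real k) ^ 3)"
proof
  show "strict_mono (\<lambda>k. delta k \<beta>)" using delta_strict_mono[OF assms] .
  have "eventually (\<lambda>k. norm (delta k \<beta> - ((\<beta> - 1) - \<beta> / (2 * (\<beta> + 1)) * (1 / (real k)\<^sup>2)))
      \<le> 4 * norm (1 / (real k) ^ 3)) sequentially"
    using delta_expansion_error[OF assms] by (auto simp: eventually_at_top_linorder)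
  then show "(\<lambda>k. delta k \<beta> - ((\<beta> - 1) - \<beta> / (2 * (\<beta> + 1)) * (1 / (real k)\<^sup>2)))
      \<in> O[sequentially](\<lambda>k. 1 / (real k) ^ 3)" by (rule bigoI)
qed

end
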